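(* If a fragment $F$ was in the work state and remained active in wait state, it will enter the work state again only after each and every one of its neighboring fragments has been in the work state as well.
   Context: A broadcast network is modeled as a connected graph G(V,E) with n nodes. In the fragment-level leader election algorithm, nodes are partitioned into fragments each with a candidate; id(F) = (size, candidate identity) ordered lexicographically; an external edge between F1 and F2 with id(F1) > id(F2) is outgoing for F1 and incoming for F2. Initially each node is a size-1 fragment in state wait. A fragment with an outgoing edge is in wait; a fragment in wait whose external edges are all incoming moves to work, counts its size new_size and compares with its maximal neighbor F': if new_size > X · size(F') (X > 1) it remains active, updates its size, all of its external edges become outgoing, and it goes to wait; otherwise it joins F' (edges to F' become internal). A fragment with no external edges is the leader. While in wait a fragment does nothing; its edges change only through neighbors' actions (joining it or changing their size). *)

theory Defs
  imports Complex_Main "HOL-Library.Product_Lexorder"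
begin

(* A configuration of the fragment-level algorithm on node set V.
   cand s v : the candidate (= identity) of the fragment containing node v
   sz s c   : the recorded size of the fragment whose candidate is c *)
record 'v fconf =
  cand :: "'v \<Rightarrow> 'v"
  sz   :: "'v \<Rightarrow> nat"

definition init_conf :: "'v fconf" where
  "init_conf = \<lparr> cand = (\<lambda>v. v), sz = (\<lambda>_. 1) \<rparr>"

definition fragment :: "'v set \<Rightarrow> 'v fconf \<Rightarrow> 'v \<Rightarrow> 'v set" where
  "fragment V s c = {v \<in> V. cand s v = c}"

definition fragments :: "'v set \<Rightarrow> 'v fconf \<Rightarrow> 'v set" where
  "fragments V s = cand s ` V"

definition fid :: "'v fconf \<Rightarrow> 'v \<Rightarrow> nat \<times> 'v" where
  "fid s c = (sz s c, c)"

definition neighbours :: "'v set \<Rightarrow> ('v \<times> 'v) set \<Rightarrow> 'v fconf \<Rightarrow> 'v \<Rightarrow> 'v set" where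
  "neighbours V E s c = {d. d \<noteq> c \<and> (\<exists>u w. (u, w) \<in> E \<and> u \<in> V \<and> w \<in> V \<and> cand s u = c \<and> cand s w = d)}"

(* a fragment in wait with at least one external edge, all of them incoming,
   may move to work *)
definition may_work :: "'v set \<Rightarrow> ('v \<times> 'v) set \<Rightarrow> 'v fconf \<Rightarrow> ('v::linorder) \<Rightarrow> bool" where
  "may_work V E s c \<longleftrightarrow> c \<in> fragments V s \<and> neighbours V E s c \<noteq> {}
     \<and> (\<forall>d \<in> neighbours V E s c. fid s d > fid s c)"

definition max_neighbour :: "'v set \<Rightarrow> ('v \<times> 'v) set \<Rightarrow> 'v fconf \<Rightarrow> ('v::linorder) \<Rightarrow> 'v \<Rightarrow> bool" where
  "max_neighbour V E s c d \<longleftrightarrow> d \<in> neighbours V E s c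
     \<and> (\<forall>e \<in> neighbours V E s c. fid s e \<le> fid s d)"

(* work of fragment c that ends with c remaining active (back in wait) *)
definition stay_active :: "'v set \<Rightarrow> ('v \<times> 'v) set \<Rightarrow> real \<Rightarrow> 'v fconf \<Rightarrow> ('v::linorder) \<Rightarrow> 'v fconf \<Rightarrow> bool" where
  "stay_active V E X s c s' \<longleftrightarrow> may_work V E s c \<and>
     (\<exists>d. max_neighbour V E s c d \<and>
        real (card (fragment V s c)) > X * real (sz s d) \<and>
        s' = s\<lparr> sz := (sz s)(c := card (fragment V s c)) \<rparr>)"

definition join_step :: "'v set \<Rightarrow> ('v \<times> 'v) set \<Rightarrow> real \<Rightarrow> 'v fconf \<Rightarrow> ('v::linorder) \<Rightarrow> 'v fconf \<Rightarrow> bool" where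
  "join_step V E X s c s' \<longleftrightarrow> may_work V E s c \<and>
     (\<exists>d. max_neighbour V E s c d \<and>
        \<not> (real (card (fragment V s c)) > X * real (sz s d)) \<and>
        s' = s\<lparr> cand := (\<lambda>v. if cand s v = c then d else cand s v) \<rparr>)"

(* one (atomic) work phase of fragment c *)
definition work_step :: "'v set \<Rightarrow> ('v \<times> 'v) set \<Rightarrow> real \<Rightarrow> 'v fconf \<Rightarrow> ('v::linorder) \<Rightarrow> 'v fconf \<Rightarrow> bool" where
  "work_step V E X s c s' \<longleftrightarrow> stay_active V E X s c s' \<or> join_step V E X s c s'"

definition conn_graph :: "'v set \<Rightarrow> ('v \<times> 'v) set \<Rightarrow> bool" where
  "conn_graph V E \<longleftrightarrow> finite V \<and> V \<noteq> {} \<and> E \<subseteq> V \<times> V \<and> sym E \<and>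
     (\<forall>u \<in> V. \<forall>w \<in> V. (u, w) \<in> E\<^sup>*)"

end

theory Submission
  imports Defs
begin

(* When F stays active its new size exceeds X times the size of its largest neighbour, so
   afterwards every neighbour G has strictly smaller id than F. Only G's own work can change
   G's size, and as long as neither F nor G works, the edge joining them stays external.
   Hence if G were idle until F's next work, G would then still be a neighbour with smaller
   id, and F could not enter the work state. *)

lemma work_step_may_work:
  "work_step V E X s c s' \<Longrightarrow> may_work V E s c"
  unfolding work_step_def stay_active_def join_step_def by auto

lemma work_step_keeps_fragment:
  "work_step V E X s c s' \<Longrightarrow> c \<noteq> x \<Longrightarrow> cand s v = x \<Longrightarrow> cand s' v = x"
  unfolding work_step_def stay_active_def join_step_def by auto

lemma work_step_keeps_sz:
  "work_step V E X s c s' \<Longrightarrow> c \<noteq> x \<Longrightarrow> sz s' x = sz s x"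
  unfolding work_step_def stay_active_def join_step_def by auto

lemma may_work_sz_le_neighbour:
  assumes "may_work V E s c" "d \<in> neighbours V E s c"
  shows "sz s c \<le> sz s d"
proof -
  have "fid s c < fid s d" using assms unfolding may_work_def by auto
  then show ?thesis unfolding fid_def by (auto simp: less_prod_def)
qed

lemma stay_active_sz_gt_neighbour:
  assumes active: "stay_active V E X s c s'" and "1 \<le> X"
    and d: "d \<in> neighbours V E s' c"
  shows "sz s' d < sz s' c"
proof -
  obtain m where m: "max_neighbour V E s c m"
    and grows: "real (card (fragment V s c)) > X * real (sz s m)"
    and s': "s' = s\<lparr> sz := (sz s)(c := card (fragment V s c)) \<rparr>"
    using active unfolding stay_active_def by auto
  have "d \<in> neighbours V E s c" "d \<noteq> c"
    using d s' unfolding neighbours_def by auto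
  then have "fid s d \<le> fid s m" using m unfolding max_neighbour_def by auto
  then have "real (sz s d) \<le> real (sz s m)" unfolding fid_def by (auto simp: less_eq_prod_def)
  also have "\<dots> \<le> X * real (sz s m)"
    using \<open>1 \<le> X\<close> by (simp add: mult_le_cancel_right1)
  also have "\<dots> < real (card (fragment V s c))" by (rule grows)
  finally have "sz s d < card (fragment V s c)" by simp
  then show ?thesis using s' \<open>d \<noteq> c\<close> by simp
qed

definition idle_between ::
  "'v set \<Rightarrow> ('v \<times> 'v) set \<Rightarrow> real \<Rightarrow> (nat \<Rightarrow> 'v fconf) \<Rightarrow> (nat \<Rightarrow> 'v::linorder) \<Rightarrow> 'v set
    \<Rightarrow> nat \<Rightarrow> nat \<Rightarrow> bool" where
  "idle_between V E X s act C a b \<longleftrightarrow>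
     (\<forall>i. a \<le> i \<and> i < b \<longrightarrow> work_step V E X (s i) (act i) (s (Suc i)) \<and> act i \<notin> C)"

lemma idle_between_keeps_fragment:
  assumes "idle_between V E X s act C a b" "a \<le> b" "x \<in> C" "cand (s a) v = x"
  shows "cand (s b) v = x"
  using \<open>a \<le> b\<close>
proof (induction b rule: dec_induct)
  case (step k)
  then have "work_step V E X (s k) (act k) (s (Suc k))" "act k \<noteq> x"
    using assms unfolding idle_between_def by auto
  then show ?case using step.IH work_step_keeps_fragment by blast
qed (use assms in simp)

lemma idle_between_keeps_sz:
  assumes "idle_between V E X s act C a b" "a \<le> b" "x \<in> C"
  shows "sz (s b) x = sz (s a) x"
  using \<open>a \<le> b\<close>
proof (induction b rule: dec_induct)
  case (step k)
  then show ?case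
    using assms work_step_keeps_sz unfolding idle_between_def by (metis less_Suc_eq)
qed simp

lemma idle_between_keeps_neighbour:
  assumes idle: "idle_between V E X s act {c, d} a b" "a \<le> b"
    and "d \<in> neighbours V E (s a) c"
  shows "d \<in> neighbours V E (s b) c"
proof -
  obtain u w where "(u, w) \<in> E" "u \<in> V" "w \<in> V" "d \<noteq> c"
    and "cand (s a) u = c" "cand (s a) w = d"
    using assms(3) unfolding neighbours_def by auto
  moreover have "cand (s b) u = c" "cand (s b) w = d"
    using idle idle_between_keeps_fragment calculation by (metis insertI1 insertI2 singletonI)+
  ultimately show ?thesis unfolding neighbours_def by blast
qed

theorem lemma3:
  fixes V :: "('v::linorder) set" and E :: "('v \<times> 'v) set" and X :: real
    and s :: "nat \<Rightarrow> 'v fconf" and act :: "nat \<Rightarrow> 'v" and n :: nat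
    and F :: 'v and t t' :: nat
  assumes "conn_graph V E"
    and "X > 1"
    and "s 0 = init_conf"
    and "\<forall>i < n. work_step V E X (s i) (act i) (s (Suc i))"
    and "t < t'" and "t' < n"
    and "act t = F" and "stay_active V E X (s t) F (s (Suc t))"
    and "act t' = F"
  shows "\<forall>G \<in> neighbours V E (s (Suc t)) F. \<exists>j. t < j \<and> j < t' \<and> act j = G"
proof
  fix G assume G: "G \<in> neighbours V E (s (Suc t)) F"
  show "\<exists>j. t < j \<and> j < t' \<and> act j = G"
  proof (rule ccontr)
    assume G_idle: "\<not> (\<exists>j. t < j \<and> j < t' \<and> act j = G)"
    obtain t1 where "t1 \<le> t'" "t < t1" "act t1 = F" and F_idle: "\<forall>j < t1. \<not> (t < j \<and> act j = F)"
      using ex_least_nat_le[of "\<lambda>k. t < k \<and> act k = F" t'] assms(5,9) by auto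
    have idle: "idle_between V E X s act {F, G} (Suc t) t1"
      using assms(4,6) G_idle F_idle \<open>t1 \<le> t'\<close> unfolding idle_between_def by auto
    have "work_step V E X (s t1) F (s (Suc t1))"
      using assms(4,6) \<open>act t1 = F\<close> \<open>t1 \<le> t'\<close> by (metis le_less_trans)
    then have "may_work V E (s t1) F" by (rule work_step_may_work)
    moreover have "G \<in> neighbours V E (s t1) F"
      using idle_between_keeps_neighbour[OF idle] G \<open>t < t1\<close> by simp
    ultimately have "sz (s t1) F \<le> sz (s t1) G" by (rule may_work_sz_le_neighbour)
    moreover have "sz (s (Suc t)) G < sz (s (Suc t)) F"
      using stay_active_sz_gt_neighbour assms(2,8) G by fastforce
    ultimately show False
      using idle_between_keeps_sz[OF idle] \<open>t < t1\<close> by simp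
  qed
qed

end
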